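(* Let $\mathcal{F}$ be a multidiforest. Then the complex of directed trees $DT(\mathcal{F})$ is vertex decomposable.
   Context: A multidigraph $G$ consists of finite sets $V$ (vertices) and $E$ (edges) with maps $s,t:E\to V$ (source and target); distinct edges may have the same source and target. Its underlying graph $G^{un}$ has vertex set $V$, with $u,v$ adjacent iff some edge $e$ has $\{s(e),t(e)\}=\{u,v\}$ (in particular a loop $s(e)=t(e)$ makes $G^{un}$ have a loop). $G$ is a multidiforest if $G^{un}$ is a (simple) forest. A directed cycle in $G$ is a connected subgraph $C$ in which every vertex of $C$ is the source of exactly one edge of $C$ and the target of exactly one edge of $C$. A directed forest is a multidigraph with no directed cycle in which distinct edges have distinct targets. The complex of directed trees $DT(G)$ is the simplicial complex on $E$ whose simplices are the subsets $\sigma\subseteq E$ such that the subgraph with edge set $\sigma$ is a directed forest. For a simplicial complex $K$ and a vertex $v$, $\mathrm{lk}(v,K)=\{\tau\in K: v\notin\tau,\ \tau\cup\{v\}\in K\}$ and $\mathrm{del}(v,K)=\{\tau\in K: v\notin\tau\}$. A simplicial complex $K$ is vertex decomposable if $K$ is a simplex (the set of all subsets of a finite set, including $\{\emptyset\}$), or $K$ contains a vertex $v$ such that (i) both $\mathrm{lk}(v,K)$ and $\mathrm{del}(v,K)$ are vertex decomposable, and (ii) every facet (maximal simplex) of $\mathrm{del}(v,K)$ is a facet of $K$. *)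

theory Defs
  imports Main
begin

definition multidigraph :: "'v set \<Rightarrow> 'e set \<Rightarrow> ('e \<Rightarrow> 'v) \<Rightarrow> ('e \<Rightarrow> 'v) \<Rightarrow> bool" where
  "multidigraph V E s t \<longleftrightarrow> finite V \<and> finite E \<and> (\<forall>e\<in>E. s e \<in> V \<and> t e \<in> V)"

definition un_adj :: "'e set \<Rightarrow> ('e \<Rightarrow> 'v) \<Rightarrow> ('e \<Rightarrow> 'v) \<Rightarrow> 'v \<Rightarrow> 'v \<Rightarrow> bool" where
  "un_adj E s t u v \<longleftrightarrow> (\<exists>e\<in>E. {s e, t e} = {u, v})"

definition un_cycle :: "'v set \<Rightarrow> 'e set \<Rightarrow> ('e \<Rightarrow> 'v) \<Rightarrow> ('e \<Rightarrow> 'v) \<Rightarrow> 'v list \<Rightarrow> bool" where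
  "un_cycle V E s t vs \<longleftrightarrow> length vs \<ge> 3 \<and> distinct vs \<and> set vs \<subseteq> V \<and>
     (\<forall>i < length vs. un_adj E s t (vs ! i) (vs ! ((i + 1) mod length vs)))"

definition underlying_forest :: "'v set \<Rightarrow> 'e set \<Rightarrow> ('e \<Rightarrow> 'v) \<Rightarrow> ('e \<Rightarrow> 'v) \<Rightarrow> bool" where
  "underlying_forest V E s t \<longleftrightarrow> (\<forall>v. \<not> un_adj E s t v v) \<and> (\<forall>vs. \<not> un_cycle V E s t vs)"

definition multidiforest :: "'v set \<Rightarrow> 'e set \<Rightarrow> ('e \<Rightarrow> 'v) \<Rightarrow> ('e \<Rightarrow> 'v) \<Rightarrow> bool" where
  "multidiforest V E s t \<longleftrightarrow> multidigraph V E s t \<and> underlying_forest V E s t"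

definition sub_connected :: "'v set \<Rightarrow> 'e set \<Rightarrow> ('e \<Rightarrow> 'v) \<Rightarrow> ('e \<Rightarrow> 'v) \<Rightarrow> bool" where
  "sub_connected W D s t \<longleftrightarrow>
     (\<forall>u\<in>W. \<forall>w\<in>W. (u, w) \<in> ({(s e, t e) | e. e \<in> D} \<union> {(t e, s e) | e. e \<in> D})\<^sup>*)"

definition directed_cycle :: "'v set \<Rightarrow> 'e set \<Rightarrow> ('e \<Rightarrow> 'v) \<Rightarrow> ('e \<Rightarrow> 'v) \<Rightarrow> 'v set \<Rightarrow> 'e set \<Rightarrow> bool" where
  "directed_cycle V E s t W D \<longleftrightarrow> W \<noteq> {} \<and> W \<subseteq> V \<and> D \<subseteq> E \<and>
     (\<forall>e\<in>D. s e \<in> W \<and> t e \<in> W) \<and> sub_connected W D s t \<and>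
     (\<forall>v\<in>W. card {e \<in> D. s e = v} = 1 \<and> card {e \<in> D. t e = v} = 1)"

definition directed_forest :: "'v set \<Rightarrow> 'e set \<Rightarrow> ('e \<Rightarrow> 'v) \<Rightarrow> ('e \<Rightarrow> 'v) \<Rightarrow> bool" where
  "directed_forest V E s t \<longleftrightarrow> (\<forall>W D. \<not> directed_cycle V E s t W D) \<and>
     (\<forall>e1\<in>E. \<forall>e2\<in>E. e1 \<noteq> e2 \<longrightarrow> t e1 \<noteq> t e2)"

definition DT :: "'v set \<Rightarrow> 'e set \<Rightarrow> ('e \<Rightarrow> 'v) \<Rightarrow> ('e \<Rightarrow> 'v) \<Rightarrow> 'e set set" where
  "DT V E s t = {\<sigma>. \<sigma> \<subseteq> E \<and> directed_forest V \<sigma> s t}"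

definition lk :: "'a \<Rightarrow> 'a set set \<Rightarrow> 'a set set" where
  "lk v K = {\<tau> \<in> K. v \<notin> \<tau> \<and> insert v \<tau> \<in> K}"

definition del :: "'a \<Rightarrow> 'a set set \<Rightarrow> 'a set set" where
  "del v K = {\<tau> \<in> K. v \<notin> \<tau>}"

definition facet :: "'a set \<Rightarrow> 'a set set \<Rightarrow> bool" where
  "facet F K \<longleftrightarrow> F \<in> K \<and> (\<forall>G\<in>K. F \<subseteq> G \<longrightarrow> G = F)"

inductive vertex_decomposable :: "'a set set \<Rightarrow> bool" where
  simplex: "finite X \<Longrightarrow> vertex_decomposable (Pow X)"
| decomp: "\<lbrakk> {v} \<in> K; vertex_decomposable (lk v K); vertex_decomposable (del v K);
            \<forall>F. facet F (del v K) \<longrightarrow> facet F K \<rbrakk> \<Longrightarrow> vertex_decomposable K"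

end

theory Submission
  imports Defs
begin

text \<open>In a multidiforest the only directed cycles a set of edges can contain are antiparallel
  pairs, because a longer directed cycle traces a cycle of the underlying forest. Hence a set of
  edges spans a directed forest iff no two of its edges share a target or are antiparallel:
  DT is the independence complex of this conflict graph. In an independence complex, if v is
  adjacent to w and every other neighbour of v is adjacent to w, then w is a shedding vertex,
  and link and deletion of w are independence complexes of induced subgraphs. Such a pair
  exists in every induced subgraph with an edge, found at a leaf of the forest formed by the
  conflicting edges.\<close>

definition indep_complex :: "('a \<Rightarrow> 'a \<Rightarrow> bool) \<Rightarrow> 'a set \<Rightarrow> 'a set set" where
  "indep_complex C X = {\<sigma>. \<sigma> \<subseteq> X \<and> (\<forall>e\<in>\<sigma>. \<forall>f\<in>\<sigma>. \<not> C e f)}"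

lemma del_indep_complex: "del w (indep_complex C X) = indep_complex C (X - {w})"
  unfolding del_def indep_complex_def by auto

lemma lk_indep_complex:
  assumes "w \<in> X" "irreflp C" "symp C"
  shows "lk w (indep_complex C X) = indep_complex C (X - {w} - Collect (C w))"
  using assms unfolding lk_def indep_complex_def irreflp_def symp_def by blast

lemma facet_indep_complex_if_facet_del:
  assumes "irreflp C" "symp C" and v: "v \<in> X" "C v w"
    and dominated: "\<forall>x\<in>X. C v x \<longrightarrow> x = w \<or> C w x"
    and F: "facet F (del w (indep_complex C X))"
  shows "facet F (indep_complex C X)"
proof -
  have FX: "F \<in> indep_complex C (X - {w})"
    and maxF: "\<And>G. G \<in> indep_complex C (X - {w}) \<Longrightarrow> F \<subseteq> G \<Longrightarrow> G = F"
    using F unfolding facet_def del_indep_complex by auto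
  have "G = F" if G: "G \<in> indep_complex C X" "F \<subseteq> G" for G
  proof (cases "w \<in> G")
    case False
    then show ?thesis using G maxF unfolding indep_complex_def by auto
  next
    case True
    have "G - {w} = F"
      using G FX by (intro maxF) (auto simp: indep_complex_def)
    then have no_wF: "\<forall>x\<in>F. \<not> C w x" using G True unfolding indep_complex_def by auto
    \<comment> \<open>every neighbour of v is w or a neighbour of w, so v could be added to F\<close>
    have "insert v F \<in> indep_complex C (X - {w})"
      using FX no_wF v dominated assms(1,2)
      unfolding indep_complex_def irreflp_def symp_def by blast
    then have "v \<in> F" using maxF by blast
    then show ?thesis using no_wF v assms(2) unfolding symp_def by blast
  qed
  then show ?thesis using FX unfolding facet_def indep_complex_def by auto
qed

lemma vertex_decomposable_indep_complex:
  assumes "finite X" "irreflp C" "symp C"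
    and dominated_pair: "\<And>Y. Y \<subseteq> X \<Longrightarrow> \<exists>e\<in>Y. \<exists>f\<in>Y. C e f \<Longrightarrow>
        \<exists>v\<in>Y. \<exists>w\<in>Y. C v w \<and> (\<forall>x\<in>Y. C v x \<longrightarrow> x = w \<or> C w x)"
  shows "vertex_decomposable (indep_complex C X)"
  using assms(1) dominated_pair
proof (induction "card X" arbitrary: X rule: less_induct)
  case less
  show ?case
  proof (cases "\<exists>e\<in>X. \<exists>f\<in>X. C e f")
    case False
    then have "indep_complex C X = Pow X" unfolding indep_complex_def by blast
    then show ?thesis using less.prems(1) by (simp add: vertex_decomposable.simplex)
  next
    case True
    then obtain v w where vw: "v \<in> X" "w \<in> X" "C v w"
      and dominated: "\<forall>x\<in>X. C v x \<longrightarrow> x = w \<or> C w x"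
      using less.prems(2)[of X] by blast
    have IH: "vertex_decomposable (indep_complex C Y)" if Y: "Y \<subseteq> X - {w}" for Y
    proof (rule less.hyps)
      have "card Y \<le> card (X - {w})" using Y less.prems(1) by (simp add: card_mono)
      also have "\<dots> < card X" using vw(2) less.prems(1) by (metis card_Diff1_less)
      finally show "card Y < card X" .
      show "finite Y" using Y less.prems(1) by (metis finite_Diff finite_subset)
      fix Z assume "Z \<subseteq> Y" "\<exists>e\<in>Z. \<exists>f\<in>Z. C e f"
      moreover have "Z \<subseteq> X" using \<open>Z \<subseteq> Y\<close> Y by blast
      ultimately show "\<exists>v\<in>Z. \<exists>w\<in>Z. C v w \<and> (\<forall>x\<in>Z. C v x \<longrightarrow> x = w \<or> C w x)"
        using less.prems(2) by blast
    qed
    have "vertex_decomposable (lk w (indep_complex C X))"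
      unfolding lk_indep_complex[OF vw(2) assms(2,3)] by (rule IH) blast
    moreover have "vertex_decomposable (del w (indep_complex C X))"
      unfolding del_indep_complex by (rule IH) simp
    moreover have "{w} \<in> indep_complex C X"
      using vw(2) assms(2) unfolding indep_complex_def irreflp_def by auto
    ultimately show ?thesis
      using facet_indep_complex_if_facet_del[OF assms(2,3) vw(1,3) dominated]
      by (blast intro: vertex_decomposable.decomp)
  qed
qed

lemma un_adj_sym: "un_adj E s t u v \<Longrightarrow> un_adj E s t v u"
  unfolding un_adj_def by (metis insert_commute)

lemma un_adj_mono: "un_adj Y s t u v \<Longrightarrow> Y \<subseteq> E \<Longrightarrow> un_adj E s t u v"
  unfolding un_adj_def by blast

lemma un_adj_in_vertices: "multidigraph V E s t \<Longrightarrow> un_adj E s t u v \<Longrightarrow> u \<in> V \<and> v \<in> V"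
  unfolding un_adj_def multidigraph_def by (metis doubleton_eq_iff)

lemma un_adj_edge: "e \<in> E \<Longrightarrow> un_adj E s t (s e) (t e)"
  unfolding un_adj_def by blast

lemma multidigraph_mono: "multidigraph V E s t \<Longrightarrow> Y \<subseteq> E \<Longrightarrow> multidigraph V Y s t"
  unfolding multidigraph_def using finite_subset by blast

lemma underlying_forest_mono:
  "underlying_forest V E s t \<Longrightarrow> Y \<subseteq> E \<Longrightarrow> underlying_forest V Y s t"
  unfolding underlying_forest_def un_cycle_def using un_adj_mono by metis

lemma underlying_forest_no_loop: "underlying_forest V E s t \<Longrightarrow> un_adj E s t u v \<Longrightarrow> u \<noteq> v"
  unfolding underlying_forest_def by blast

definition un_path :: "'e set \<Rightarrow> ('e \<Rightarrow> 'v) \<Rightarrow> ('e \<Rightarrow> 'v) \<Rightarrow> 'v list \<Rightarrow> bool" where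
  "un_path E s t ps \<longleftrightarrow> distinct ps \<and> (\<forall>i. Suc i < length ps \<longrightarrow> un_adj E s t (ps ! i) (ps ! Suc i))"

lemma un_cycle_take_un_path:
  assumes p: "un_path E s t p" "set p \<subseteq> V" and k: "2 \<le> k" "k < length p"
    and closing: "un_adj E s t (p ! 0) (p ! k)"
  shows "un_cycle V E s t (take (Suc k) p)"
  unfolding un_cycle_def
proof (intro conjI allI impI)
  let ?c = "take (Suc k) p"
  have lc: "length ?c = Suc k" using k by simp
  show "3 \<le> length ?c" "distinct ?c" "set ?c \<subseteq> V"
    using lc p k set_take_subset[of "Suc k" p] unfolding un_path_def by auto
  fix i assume i: "i < length ?c"
  show "un_adj E s t (?c ! i) (?c ! ((i + 1) mod length ?c))"
  proof (cases "i = k")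
    case True
    then show ?thesis using un_adj_sym[OF closing] lc by simp
  next
    case False
    then have "(i + 1) mod length ?c = Suc i" "Suc i < length p" using lc i k by auto
    then show ?thesis using p(1) False lc i unfolding un_path_def by simp
  qed
qed

text \<open>The first vertex of a longest path is a leaf.\<close>
lemma underlying_forest_has_leaf:
  assumes G: "multidigraph V E s t" "underlying_forest V E s t" and "E \<noteq> {}"
  shows "\<exists>x y. un_adj E s t x y \<and> (\<forall>z. un_adj E s t x z \<longrightarrow> z = y)"
proof -
  have noloop: "\<And>v. \<not> un_adj E s t v v" and nocycle: "\<And>vs. \<not> un_cycle V E s t vs"
    and fV: "finite V"
    using G unfolding underlying_forest_def multidigraph_def by auto
  define P where "P ps \<longleftrightarrow> un_path E s t ps \<and> set ps \<subseteq> V" for ps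
  obtain e where e: "e \<in> E" using \<open>E \<noteq> {}\<close> by blast
  have "s e \<noteq> t e" using noloop un_adj_edge[OF e] by metis
  then have "P [s e, t e]"
    using un_adj_edge[OF e] un_adj_in_vertices[OF G(1)]
    unfolding P_def un_path_def by (auto simp: less_Suc_eq)
  moreover have "length q < Suc (card V)" if "P q" for q
    using that fV unfolding P_def un_path_def by (metis card_mono distinct_card le_imp_less_Suc)
  ultimately obtain p where p: "P p" and longest: "\<And>q. P q \<Longrightarrow> length q \<le> length p"
    and lp: "2 \<le> length p"
    using ex_has_greatest_nat[of P "[s e, t e]" length "Suc (card V)"] by force
  have "z = p ! 1" if z: "un_adj E s t (p ! 0) z" for z
  proof (cases "z \<in> set p")
    case False
    have "P (z # p)"
      using p False un_adj_in_vertices[OF G(1) z] un_adj_sym[OF z]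
      unfolding P_def un_path_def by (auto simp: nth_Cons split: nat.split)
    then show ?thesis using longest by fastforce
  next
    case True
    then obtain k where k: "k < length p" "p ! k = z" by (auto simp: in_set_conv_nth)
    have "k \<noteq> 0" using z k noloop by metis
    moreover have "\<not> 2 \<le> k"
      using un_cycle_take_un_path[of E s t p V k] p k z nocycle unfolding P_def by auto
    ultimately have "k = 1" by linarith
    then show ?thesis using k by simp
  qed
  moreover have "un_adj E s t (p ! 0) (p ! 1)" using p lp unfolding P_def un_path_def by auto
  ultimately show ?thesis by blast
qed

definition conflict :: "('e \<Rightarrow> 'v) \<Rightarrow> ('e \<Rightarrow> 'v) \<Rightarrow> 'e \<Rightarrow> 'e \<Rightarrow> bool" where
  "conflict s t e f \<longleftrightarrow> e \<noteq> f \<and> (t e = t f \<or> (s e = t f \<and> t e = s f))"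

lemma irreflp_conflict: "irreflp (conflict s t)"
  unfolding irreflp_def conflict_def by simp

lemma conflict_commute: "conflict s t e f \<longleftrightarrow> conflict s t f e"
  unfolding conflict_def by auto

lemma symp_conflict: "symp (conflict s t)"
  by (rule sympI) (simp add: conflict_commute)

text \<open>Take a leaf x of the edges involved in some conflict, with unique neighbour y. An edge
  into x, or else an edge from x to y, has all its conflict partners joining x and y, resp.
  ending in y; these partners conflict pairwise.\<close>
lemma conflict_dominated_pair:
  assumes G: "multidiforest V E s t" and "Y \<subseteq> E" and "\<exists>e\<in>Y. \<exists>f\<in>Y. conflict s t e f"
  shows "\<exists>v\<in>Y. \<exists>w\<in>Y. conflict s t v w \<and> (\<forall>x\<in>Y. conflict s t v x \<longrightarrow> x = w \<or> conflict s t w x)"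
proof -
  define Z where "Z = {e\<in>Y. \<exists>f\<in>Y. conflict s t e f}"
  have "Z \<subseteq> Y" unfolding Z_def by blast
  have Z: "Z \<subseteq> E" "Z \<noteq> {}" using assms(2,3) unfolding Z_def by blast+
  have graph: "multidigraph V E s t" and forest: "underlying_forest V E s t"
    using G unfolding multidiforest_def by auto
  obtain x y where xy: "un_adj Z s t x y" and leaf: "\<And>z. un_adj Z s t x z \<Longrightarrow> z = y"
    using underlying_forest_has_leaf[OF multidigraph_mono[OF graph Z(1)]
        underlying_forest_mono[OF forest Z(1)] Z(2)] by blast
  have "x \<noteq> y"
    using forest un_adj_mono[OF xy Z(1)] by (rule underlying_forest_no_loop)
  have partner_in_Z: "z \<in> Z" if "b \<in> Y" "z \<in> Y" "conflict s t b z" for b z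
    using that conflict_commute[of s t b z] unfolding Z_def by blast
  have other_end: "{s z, t z} = {x, y}" if "z \<in> Z" "x \<in> {s z, t z}" for z
    using that leaf[of "s z"] leaf[of "t z"] un_adj_edge[OF that(1), of s t]
      un_adj_sym[of Z s t "s z" "t z"] by auto
  obtain a where a: "a \<in> Z" "{s a, t a} = {x, y}" using xy unfolding un_adj_def by blast
  show ?thesis
  proof (cases "\<exists>b\<in>Z. s b = y \<and> t b = x")
    case True
    then obtain b where b: "b \<in> Z" "s b = y" "t b = x" by blast
    have partner: "{s z, t z} = {x, y}" if "z \<in> Y" "conflict s t b z" for z
      using that b partner_in_Z[of b z] other_end[of z] unfolding Z_def conflict_def by auto
    obtain w where w: "w \<in> Y" "conflict s t b w" using b unfolding Z_def by blast
    have "\<forall>z\<in>Y. conflict s t b z \<longrightarrow> z = w \<or> conflict s t w z"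
    proof (intro ballI impI)
      fix z assume "z \<in> Y" "conflict s t b z"
      from partner[OF this] partner[OF w] show "z = w \<or> conflict s t w z"
        using \<open>x \<noteq> y\<close> unfolding conflict_def doubleton_eq_iff by auto
    qed
    moreover have "b \<in> Y" using b(1) \<open>Z \<subseteq> Y\<close> by blast
    ultimately show ?thesis using w by blast
  next
    case False
    then have a': "s a = x" "t a = y" using a \<open>x \<noteq> y\<close> by (auto simp: doubleton_eq_iff)
    have target: "t z = y" if "z \<in> Y" "conflict s t a z" for z
      using that a a' False partner_in_Z[OF subsetD[OF \<open>Z \<subseteq> Y\<close> a(1)] that]
      unfolding conflict_def by auto
    obtain w where w: "w \<in> Y" "conflict s t a w" using a unfolding Z_def by blast
    have "\<forall>z\<in>Y. conflict s t a z \<longrightarrow> z = w \<or> conflict s t w z"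
    proof (intro ballI impI)
      fix z assume "z \<in> Y" "conflict s t a z"
      from target[OF this] target[OF w] show "z = w \<or> conflict s t w z" unfolding conflict_def by auto
    qed
    moreover have "a \<in> Y" using a(1) \<open>Z \<subseteq> Y\<close> by blast
    ultimately show ?thesis using w by auto
  qed
qed

lemma directed_cycle_antiparallel:
  assumes "multidigraph V E s t" "\<sigma> \<subseteq> E" "e \<in> \<sigma>" "f \<in> \<sigma>"
    and "s e \<noteq> t e" "s f = t e" "t f = s e"
  shows "directed_cycle V \<sigma> s t {s e, t e} {e, f}"
proof -
  have "e \<noteq> f" using assms(5-7) by auto
  have "{x \<in> {e, f}. s x = s e} = {e}" "{x \<in> {e, f}. t x = t e} = {e}"
    "{x \<in> {e, f}. s x = t e} = {f}" "{x \<in> {e, f}. t x = s e} = {f}"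
    using assms(5-7) \<open>e \<noteq> f\<close> by auto
  then have cards: "card {x \<in> {e, f}. s x = v} = 1 \<and> card {x \<in> {e, f}. t x = v} = 1"
    if "v \<in> {s e, t e}" for v
    using that by auto
  have "sub_connected {s e, t e} {e, f} s t"
    unfolding sub_connected_def by blast
  then show ?thesis
    using assms cards unfolding directed_cycle_def multidigraph_def by auto
qed

lemma conflict_free_if_directed_forest:
  assumes G: "multidiforest V E s t" and "\<sigma> \<subseteq> E" "directed_forest V \<sigma> s t"
    and "e \<in> \<sigma>" "f \<in> \<sigma>"
  shows "\<not> conflict s t e f"
proof
  assume c: "conflict s t e f"
  have graph: "multidigraph V E s t" and forest: "underlying_forest V E s t"
    using G unfolding multidiforest_def by auto
  have target_inj: "\<forall>e1\<in>\<sigma>. \<forall>e2\<in>\<sigma>. e1 \<noteq> e2 \<longrightarrow> t e1 \<noteq> t e2"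
    and acyclic: "\<forall>W D. \<not> directed_cycle V \<sigma> s t W D"
    using assms(3) unfolding directed_forest_def by auto
  have "e \<noteq> f" using c unfolding conflict_def by blast
  then have "t e \<noteq> t f" using target_inj assms(4,5) by blast
  then have "s f = t e" "t f = s e" using c unfolding conflict_def by metis+
  moreover have "s e \<noteq> t e"
    using underlying_forest_no_loop[OF forest un_adj_edge] assms(2,4) by blast
  ultimately have "directed_cycle V \<sigma> s t {s e, t e} {e, f}"
    using directed_cycle_antiparallel[OF graph assms(2,4,5)] by blast
  then show False using acyclic by blast
qed

lemma first_repetition:
  fixes f :: "nat \<Rightarrow> 'a"
  assumes "finite W" "\<And>n. f n \<in> W"
  obtains i j where "i < j" "f i = f j" "inj_on f {..<j}"
proof -
  have "\<not> inj_on f {..card W}"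
  proof
    assume "inj_on f {..card W}"
    then have "card (f ` {..card W}) = Suc (card W)" by (simp add: card_image)
    moreover have "card (f ` {..card W}) \<le> card W"
      using assms by (intro card_mono) auto
    ultimately show False by simp
  qed
  define j where "j = (LEAST j. \<not> inj_on f {..j})"
  have j: "\<not> inj_on f {..j}" unfolding j_def by (rule LeastI) fact
  obtain k where k: "j = Suc k" using j by (cases j) auto
  have "inj_on f {..k}"
    using not_less_Least[of k "\<lambda>j. \<not> inj_on f {..j}"] k unfolding j_def by auto
  then have "inj_on f {..<j}" using k by (simp add: lessThan_Suc_atMost)
  moreover obtain i where "i < j" "f i = f j"
    using j \<open>inj_on f {..<j}\<close> unfolding inj_on_def
    by (metis atMost_iff lessThan_iff antisym_conv2 linorder_not_less)
  ultimately show ?thesis using that by blast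
qed

lemma un_cycle_closed_walk:
  assumes "inj_on f {i..<j}" "i + 3 \<le> j" "f j = f i" "f ` {i..<j} \<subseteq> V"
    and walk: "\<And>n. un_adj E s t (f n) (f (Suc n))"
  shows "un_cycle V E s t (map f [i..<j])"
  unfolding un_cycle_def
proof (intro conjI allI impI)
  let ?c = "map f [i..<j]"
  show "3 \<le> length ?c" "distinct ?c" "set ?c \<subseteq> V"
    using assms(1,2,4) by (auto simp: distinct_map)
  fix k assume k: "k < length ?c"
  have "?c ! ((k + 1) mod length ?c) = f (Suc (i + k))"
  proof (cases "k + 1 < length ?c")
    case False
    then have "k + 1 = length ?c" using k by simp
    then have "Suc (i + k) = j" "(k + 1) mod length ?c = 0" using assms(2) by auto
    then show ?thesis using assms(2,3) by simp
  qed simp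
  then show "un_adj E s t (?c ! k) (?c ! ((k + 1) mod length ?c))"
    using walk[of "i + k"] k by simp
qed

lemma directed_cycle_walk:
  assumes "directed_cycle V \<sigma> s t W D"
  obtains walk where "\<And>n. walk n \<in> W" "\<And>n. \<exists>e\<in>D. s e = walk n \<and> t e = walk (Suc n)"
proof -
  have W: "W \<noteq> {}" "\<forall>e\<in>D. s e \<in> W \<and> t e \<in> W"
    and out_card: "\<forall>v\<in>W. card {e \<in> D. s e = v} = 1"
    using assms unfolding directed_cycle_def by auto
  have "\<forall>v\<in>W. \<exists>e. e \<in> D \<and> s e = v"
  proof
    fix v assume "v \<in> W"
    then have "card {e \<in> D. s e = v} = 1" using out_card by blast
    then have "{e \<in> D. s e = v} \<noteq> {}" by (metis card.empty zero_neq_one)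
    then show "\<exists>e. e \<in> D \<and> s e = v" by blast
  qed
  then obtain out where out: "\<And>v. v \<in> W \<Longrightarrow> out v \<in> D \<and> s (out v) = v" by metis
  obtain v0 where "v0 \<in> W" using W(1) by blast
  define walk where "walk n = ((t \<circ> out) ^^ n) v0" for n
  have walk_W: "walk n \<in> W" for n
    by (induction n) (use \<open>v0 \<in> W\<close> out W(2) in \<open>auto simp: walk_def\<close>)
  have "\<exists>e\<in>D. s e = walk n \<and> t e = walk (Suc n)" for n
    using out[OF walk_W[of n]] by (auto simp: walk_def)
  then show ?thesis using that walk_W by blast
qed

text \<open>Follow the out-edges of a directed cycle until a vertex repeats: a repetition after one
  step is a loop, after two steps an antiparallel pair, and after three or more steps a cycle
  of the underlying graph.\<close>
lemma directed_forest_if_conflict_free: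
  assumes G: "multidiforest V E s t" and "\<sigma> \<subseteq> E"
    and free: "\<And>e f. e \<in> \<sigma> \<Longrightarrow> f \<in> \<sigma> \<Longrightarrow> \<not> conflict s t e f"
  shows "directed_forest V \<sigma> s t"
proof -
  have fV: "finite V" and forest: "underlying_forest V E s t"
    using G unfolding multidiforest_def multidigraph_def by auto
  have "\<not> directed_cycle V \<sigma> s t W D" for W D
  proof
    assume dc: "directed_cycle V \<sigma> s t W D"
    then have "W \<subseteq> V" "D \<subseteq> \<sigma>" unfolding directed_cycle_def by auto
    obtain walk where walk_W: "\<And>n. walk n \<in> W"
      and step: "\<And>n. \<exists>e\<in>D. s e = walk n \<and> t e = walk (Suc n)"
      using directed_cycle_walk[OF dc] by blast
    obtain out where out: "\<And>n. out n \<in> \<sigma> \<and> s (out n) = walk n \<and> t (out n) = walk (Suc n)"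
      using step \<open>D \<subseteq> \<sigma>\<close> by (metis subsetD)
    have adj: "un_adj E s t (walk n) (walk (Suc n))" for n
      using un_adj_edge[of "out n" E s t] out[of n] assms(2) by auto
    obtain i j where ij: "i < j" "walk i = walk j" "inj_on walk {..<j}"
      using first_repetition[of W walk] finite_subset[OF \<open>W \<subseteq> V\<close> fV] walk_W by blast
    consider "j = Suc i" | "j = Suc (Suc i)" | "i + 3 \<le> j" using ij(1) by linarith
    then show False
    proof cases
      case 1
      then show False using underlying_forest_no_loop[OF forest adj[of i]] ij(2) by simp
    next
      case 2
      then have "walk i \<noteq> walk (Suc i)" using ij(3) by (auto dest: inj_onD)
      then have "conflict s t (out i) (out (Suc i))"
        using out[of i] out[of "Suc i"] ij(2) 2 unfolding conflict_def by auto
      then show False using free out by blast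
    next
      case 3
      have "inj_on walk {i..<j}" using ij(3) by (rule inj_on_subset) auto
      then have "un_cycle V E s t (map walk [i..<j])"
        using 3 ij(2) walk_W \<open>W \<subseteq> V\<close> adj by (intro un_cycle_closed_walk) auto
      then show False using forest unfolding underlying_forest_def by blast
    qed
  qed
  moreover have "t e1 \<noteq> t e2" if "e1 \<in> \<sigma>" "e2 \<in> \<sigma>" "e1 \<noteq> e2" for e1 e2
    using free[OF that(1,2)] that(3) unfolding conflict_def by blast
  ultimately show ?thesis unfolding directed_forest_def by blast
qed

lemma DT_eq_indep_complex_conflict:
  assumes "multidiforest V E s t"
  shows "DT V E s t = indep_complex (conflict s t) E"
  unfolding DT_def indep_complex_def
proof (intro Collect_cong conj_cong)
  fix \<sigma> assume "\<sigma> \<subseteq> E"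
  show "directed_forest V \<sigma> s t \<longleftrightarrow> (\<forall>e\<in>\<sigma>. \<forall>f\<in>\<sigma>. \<not> conflict s t e f)"
    using conflict_free_if_directed_forest[OF assms \<open>\<sigma> \<subseteq> E\<close>]
      directed_forest_if_conflict_free[OF assms \<open>\<sigma> \<subseteq> E\<close>] by blast
qed simp

theorem theorem5p2:
  fixes V :: "'v set" and E :: "'e set" and s t :: "'e \<Rightarrow> 'v"
  assumes "multidiforest V E s t"
  shows "vertex_decomposable (DT V E s t)"
proof -
  have "finite E" using assms unfolding multidiforest_def multidigraph_def by blast
  then have "vertex_decomposable (indep_complex (conflict s t) E)"
    using irreflp_conflict symp_conflict conflict_dominated_pair[OF assms]
    by (rule vertex_decomposable_indep_complex)
  then show ?thesis using DT_eq_indep_complex_conflict[OF assms] by simp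
qed

end
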